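(* Let $G$ be a simple biconnected graph with a vertex $w$ such that the set $F$ of edges not incident to $w$ is a flacet of $\mathcal{M}(G)$. If $F$ is $k$-level, then $G$ has a minor isomorphic to $\operatorname{cone}(H)$ for some minimally biconnected graph $H$ on $k$ vertices.
   Context: The graphic matroid $\mathcal{M}(G)$ has ground set $E(G)$ and bases the spanning forests. A flacet of a matroid $\mathcal{M}$ on $E$ is a flat $\emptyset\neq S\subsetneq E$ such that $\mathcal{M}|_S$ and $\mathcal{M}/S$ are connected. A flacet $F$ is $k$-level if $\ell_F(x)=\sum_{e\in F}x_e$ takes exactly $k$ distinct values on $\{\mathbf{1}_B: B \text{ a basis}\}$. The cone over a graph $H=(V,E)$ with apex $w\notin V$ is the graph $(V\cup\{w\}, E\cup\{wv:v\in V\})$. A graph is minimally biconnected if it is biconnected and $H\setminus e$ is not biconnected for every edge $e$. *)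

theory Defs
  imports Main
begin

definition simple_graph :: "'a set \<Rightarrow> 'a set set \<Rightarrow> bool" where
  "simple_graph V E \<longleftrightarrow> finite V \<and> (\<forall>e\<in>E. e \<subseteq> V \<and> card e = 2)"

definition reach :: "'a set set \<Rightarrow> 'a \<Rightarrow> 'a \<Rightarrow> bool" where
  "reach A x y \<longleftrightarrow> (\<lambda>u v. {u, v} \<in> A)\<^sup>*\<^sup>* x y"

definition graph_connected :: "'a set \<Rightarrow> 'a set set \<Rightarrow> bool" where
  "graph_connected V E \<longleftrightarrow> (\<forall>x\<in>V. \<forall>y\<in>V. reach E x y)"

definition delete_vertex :: "'a set \<Rightarrow> 'a set set \<Rightarrow> 'a \<Rightarrow> 'a set \<times> 'a set set" where
  "delete_vertex V E v = (V - {v}, {e \<in> E. v \<notin> e})"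

text \<open>Biconnected (2-connected, with K2 counted as biconnected): at least two vertices,
  connected, and no cut vertex.\<close>
definition biconnected :: "'a set \<Rightarrow> 'a set set \<Rightarrow> bool" where
  "biconnected V E \<longleftrightarrow> card V \<ge> 2 \<and> graph_connected V E \<and>
     (\<forall>v\<in>V. graph_connected (V - {v}) {e \<in> E. v \<notin> e})"

definition minimally_biconnected :: "'a set \<Rightarrow> 'a set set \<Rightarrow> bool" where
  "minimally_biconnected V E \<longleftrightarrow> biconnected V E \<and> (\<forall>e\<in>E. \<not> biconnected V (E - {e}))"

definition cone :: "'a set \<Rightarrow> 'a set set \<Rightarrow> 'a \<Rightarrow> 'a set \<times> 'a set set" where
  "cone V E w = (insert w V, E \<union> {{w, v} | v. v \<in> V})"

text \<open>G = (VG, EG) has a minor isomorphic to H = (VH, EH): there are pairwise disjoint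
  nonempty connected branch sets X v (v in VH) in G such that every edge uv of H
  is realised by an edge of G between X u and X v.\<close>
definition has_minor :: "'a set \<Rightarrow> 'a set set \<Rightarrow> 'b set \<Rightarrow> 'b set set \<Rightarrow> bool" where
  "has_minor VG EG VH EH \<longleftrightarrow>
     (\<exists>X :: 'b \<Rightarrow> 'a set.
        (\<forall>v\<in>VH. X v \<noteq> {} \<and> X v \<subseteq> VG \<and> graph_connected (X v) {e \<in> EG. e \<subseteq> X v}) \<and>
        (\<forall>u\<in>VH. \<forall>v\<in>VH. u \<noteq> v \<longrightarrow> X u \<inter> X v = {}) \<and>
        (\<forall>u v. {u, v} \<in> EH \<longrightarrow> (\<exists>x\<in>X u. \<exists>y\<in>X v. {x, y} \<in> EG)))"

definition m_basis :: "'e set \<Rightarrow> ('e set \<Rightarrow> bool) \<Rightarrow> 'e set \<Rightarrow> bool" where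
  "m_basis E indep B \<longleftrightarrow> B \<subseteq> E \<and> indep B \<and> (\<forall>e\<in>E - B. \<not> indep (insert e B))"

definition m_circuit :: "'e set \<Rightarrow> ('e set \<Rightarrow> bool) \<Rightarrow> 'e set \<Rightarrow> bool" where
  "m_circuit E indep C \<longleftrightarrow> C \<subseteq> E \<and> \<not> indep C \<and> (\<forall>D. D \<subset> C \<longrightarrow> indep D)"

definition m_rank :: "('e set \<Rightarrow> bool) \<Rightarrow> 'e set \<Rightarrow> nat" where
  "m_rank indep X = Max (card ` {I. I \<subseteq> X \<and> indep I})"

definition m_flat :: "'e set \<Rightarrow> ('e set \<Rightarrow> bool) \<Rightarrow> 'e set \<Rightarrow> bool" where
  "m_flat E indep S \<longleftrightarrow> S \<subseteq> E \<and> (\<forall>e\<in>E - S. m_rank indep (insert e S) > m_rank indep S)"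

text \<open>M|S is connected: any two distinct elements of S lie in a common circuit of M|S
  (circuits of M|S are the circuits of M contained in S).\<close>
definition restriction_connected :: "'e set \<Rightarrow> ('e set \<Rightarrow> bool) \<Rightarrow> 'e set \<Rightarrow> bool" where
  "restriction_connected E indep S \<longleftrightarrow>
     (\<forall>e\<in>S. \<forall>f\<in>S. e \<noteq> f \<longrightarrow> (\<exists>C. m_circuit E indep C \<and> C \<subseteq> S \<and> e \<in> C \<and> f \<in> C))"

text \<open>Circuits of M/S: the minimal nonempty sets of the form C - S, C a circuit of M.\<close>
definition contraction_circuit :: "'e set \<Rightarrow> ('e set \<Rightarrow> bool) \<Rightarrow> 'e set \<Rightarrow> 'e set \<Rightarrow> bool" where
  "contraction_circuit E indep S D \<longleftrightarrow>
     D \<noteq> {} \<and> (\<exists>C. m_circuit E indep C \<and> D = C - S) \<and>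
     (\<forall>D'. D' \<noteq> {} \<and> (\<exists>C. m_circuit E indep C \<and> D' = C - S) \<longrightarrow> \<not> D' \<subset> D)"

definition contraction_connected :: "'e set \<Rightarrow> ('e set \<Rightarrow> bool) \<Rightarrow> 'e set \<Rightarrow> bool" where
  "contraction_connected E indep S \<longleftrightarrow>
     (\<forall>e\<in>E - S. \<forall>f\<in>E - S. e \<noteq> f \<longrightarrow>
        (\<exists>D. contraction_circuit E indep S D \<and> e \<in> D \<and> f \<in> D))"

definition flacet :: "'e set \<Rightarrow> ('e set \<Rightarrow> bool) \<Rightarrow> 'e set \<Rightarrow> bool" where
  "flacet E indep S \<longleftrightarrow> m_flat E indep S \<and> S \<noteq> {} \<and> S \<subset> E \<and>
     restriction_connected E indep S \<and> contraction_connected E indep S"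

text \<open>The linear form sum_{e in F} x_e evaluated at the indicator vector of B is card (B \<inter> F).\<close>
definition k_level :: "'e set \<Rightarrow> ('e set \<Rightarrow> bool) \<Rightarrow> 'e set \<Rightarrow> nat \<Rightarrow> bool" where
  "k_level E indep F k \<longleftrightarrow> card {card (B \<inter> F) | B. m_basis E indep B} = k"

text \<open>An edge set is independent (a forest) iff it contains no cycle, i.e. no edge
  {u,v} of it has its endpoints joined by a path in the remaining edges.\<close>
definition graphic_indep :: "'a set set \<Rightarrow> bool" where
  "graphic_indep A \<longleftrightarrow> (\<forall>u v. {u, v} \<in> A \<longrightarrow> \<not> reach (A - {{u, v}}) u v)"

end

theory Submission
  imports Defs
begin

text \<open>
  Write F for the edges avoiding w. Since M|F is connected, G - w is 2-connected: two edges at a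
  cut vertex v of G - w on different sides lie on a common circuit within F, but no circuit can
  cross a cut vertex. Every basis of M(G)
  has |V| - 1 elements, between 1 and deg w of them at w, and bases with one and with two edges
  at w exist; hence 2 \<le> k \<le> deg w. Choose k neighbours N of w. In a 2-connected graph every
  vertex x lies on an edge xy with G - x - y connected, and contracting such an edge keeps the
  graph 2-connected; contracting edges at vertices outside N therefore leaves a 2-connected graph
  on N that is a minor of G - w whose branch sets contain their roots. A minimally biconnected
  spanning subgraph of it, together with the branch set {w}, is a minor of G isomorphic to the
  cone over a minimally biconnected graph on k vertices.
\<close>

section \<open>Reachability\<close>

lemma reach_refl [simp]: "reach A x x"
  by (simp add: reach_def)

lemma reach_edge: "{x, y} \<in> A \<Longrightarrow> reach A x y"
  by (simp add: reach_def r_into_rtranclp)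

lemma reach_trans: "reach A x y \<Longrightarrow> reach A y z \<Longrightarrow> reach A x z"
  unfolding reach_def by (rule rtranclp_trans)

lemma reach_sym: "reach A x y \<Longrightarrow> reach A y x"
  unfolding reach_def
proof (induction rule: rtranclp_induct)
  case (step y z)
  then have "{z, y} \<in> A" by (simp add: insert_commute)
  then show ?case using step(3) by (meson converse_rtranclp_into_rtranclp)
qed simp

lemma reach_edge_trans: "reach A x y \<Longrightarrow> {y, z} \<in> A \<Longrightarrow> reach A x z"
  using reach_trans reach_edge by metis

lemma reach_mono: "reach A x y \<Longrightarrow> A \<subseteq> B \<Longrightarrow> reach B x y"
  unfolding reach_def by (erule rtranclp_mono[THEN predicate2D, rotated]) auto

lemma reach_map:
  assumes "reach S x y" and "\<And>a b. {a, b} \<in> S \<Longrightarrow> reach T (\<pi> a) (\<pi> b)"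
  shows "reach T (\<pi> x) (\<pi> y)"
  using assms(1) unfolding reach_def[of S]
proof (induction rule: rtranclp_induct)
  case (step y z)
  then show ?case using assms(2) reach_trans by metis
qed simp

lemma reach_lift:
  assumes "reach S x y" and "\<And>a b. {a, b} \<in> S \<Longrightarrow> reach T a b"
  shows "reach T x y"
  using reach_map[of S x y T id] assms by simp

lemma reach_closed:
  assumes "reach S x y" "x \<in> P" "\<And>a b. {a, b} \<in> S \<Longrightarrow> a \<in> P \<Longrightarrow> b \<in> P"
  shows "y \<in> P"
  using assms(1,2) unfolding reach_def
  by (induction rule: rtranclp_induct) (auto intro: assms(3))

lemma reach_restrict:
  assumes "reach S x y" "x \<in> P" "\<And>a b. {a, b} \<in> S \<Longrightarrow> a \<in> P \<Longrightarrow> b \<in> P"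
  shows "reach {e \<in> S. e \<subseteq> P} x y"
  using assms(1,2) unfolding reach_def
proof (induction rule: rtranclp_induct)
  case (step y z)
  have "y \<in> P" using step(1,4) assms(3) reach_closed unfolding reach_def by metis
  then have "z \<in> P" using assms(3) step(2) by blast
  with \<open>y \<in> P\<close> step show ?case by (simp add: rtranclp.rtrancl_into_rtrancl)
qed simp

lemma reach_endpoints: "reach S x y \<Longrightarrow> x = y \<or> (x \<in> \<Union>S \<and> y \<in> \<Union>S)"
  unfolding reach_def by (induction rule: rtranclp_induct) auto

lemma reach_avoid:
  assumes "reach S a x" "a \<noteq> v" "\<forall>e\<in>S. v \<notin> e"
  shows "x \<noteq> v"
  using reach_endpoints[OF assms(1)] assms(2,3) by blast

lemma reach_insert_iff:
  "reach (insert {u, v} A) x y \<longleftrightarrow>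
     reach A x y \<or> (reach A x u \<and> reach A v y) \<or> (reach A x v \<and> reach A u y)"
proof
  assume "reach (insert {u, v} A) x y"
  then show "reach A x y \<or> (reach A x u \<and> reach A v y) \<or> (reach A x v \<and> reach A u y)"
    unfolding reach_def[of "insert _ _"]
  proof (induction rule: rtranclp_induct)
    case (step y z)
    from step(2) consider "{y, z} \<in> A" | "y = u" "z = v" | "y = v" "z = u"
      by (auto simp: doubleton_eq_iff)
    then show ?case
    proof cases
      case 1
      then show ?thesis using step(3) reach_edge_trans by metis
    qed (use step(3) in auto)
  qed simp
next
  have "reach (insert {u, v} A) u v" "reach (insert {u, v} A) v u"
    by (auto intro: reach_edge simp: insert_commute)
  moreover have "reach A a b \<Longrightarrow> reach (insert {u, v} A) a b" for a b
    by (erule reach_mono) blast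
  ultimately show "reach A x y \<or> (reach A x u \<and> reach A v y) \<or> (reach A x v \<and> reach A u y)
    \<Longrightarrow> reach (insert {u, v} A) x y"
    by (metis reach_trans)
qed

lemma graph_connected_mono:
  assumes "graph_connected X A" "A \<subseteq> B"
  shows "graph_connected X B"
  unfolding graph_connected_def
proof (intro ballI)
  fix x y assume "x \<in> X" "y \<in> X"
  then have "reach A x y" using assms(1) unfolding graph_connected_def by blast
  then show "reach B x y" using assms(2) by (rule reach_mono)
qed

lemma reach_class_eq: "reach A x y \<Longrightarrow> Collect (reach A x) = Collect (reach A y)"
  using reach_trans reach_sym by (metis (mono_tags, opaque_lifting) Collect_cong)

section \<open>Forests of the graphic matroid\<close>

lemma graphic_indep_mono: "graphic_indep A \<Longrightarrow> B \<subseteq> A \<Longrightarrow> graphic_indep B"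
  unfolding graphic_indep_def by (meson Diff_mono reach_mono subset_iff subset_refl)

lemma graphic_indep_insert:
  assumes indep: "graphic_indep A" and not_reach: "\<not> reach A u v"
  shows "graphic_indep (insert {u, v} A)"
  unfolding graphic_indep_def
proof (intro allI impI notI)
  fix p q
  assume pq: "{p, q} \<in> insert {u, v} A" and r: "reach (insert {u, v} A - {{p, q}}) p q"
  show False
  proof (cases "{p, q} = {u, v}")
    case True
    then have "reach A p q" using r by (rule_tac reach_mono) auto
    then show False using True not_reach reach_sym[of A v u] by (auto simp: doubleton_eq_iff)
  next
    case False
    let ?A' = "A - {{p, q}}"
    have "{p, q} \<in> A" using pq False by blast
    moreover have "insert {u, v} A - {{p, q}} = insert {u, v} ?A'" using False by blast
    ultimately have "reach ?A' p u \<and> reach ?A' v q \<or> reach ?A' p v \<and> reach ?A' u q"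
      using r indep reach_insert_iff[of u v ?A' p q] unfolding graphic_indep_def by auto
    then have "reach A p u \<and> reach A v q \<or> reach A p v \<and> reach A u q"
      by (meson Diff_subset reach_mono)
    with \<open>{p, q} \<in> A\<close> show False
      using not_reach by (meson reach_edge reach_sym reach_trans)
  qed
qed

lemma graphic_indep_insert_isolated:
  assumes "graphic_indep A" "u \<notin> \<Union>A" "u \<noteq> v"
  shows "graphic_indep (insert {u, v} A)"
  using assms graphic_indep_insert reach_endpoints by metis

lemma not_reach_if_graphic_indep_insert:
  assumes "graphic_indep (insert {u, v} A)" "{u, v} \<notin> A"
  shows "\<not> reach A u v"
proof -
  have "insert {u, v} A - {{u, v}} = A" using assms(2) by blast
  then show ?thesis using assms(1) unfolding graphic_indep_def by force
qed

definition components :: "'a set set \<Rightarrow> 'a set \<Rightarrow> 'a set set" where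
  "components A V0 = (\<lambda>x. Collect (reach A x)) ` V0"

lemma reach_insert_class:
  "Collect (reach (insert {u, v} A) x) =
    (if reach A x u \<or> reach A x v then Collect (reach A u) \<union> Collect (reach A v)
     else Collect (reach A x))"
proof -
  have same: "reach A x y \<longleftrightarrow> reach A z y" if "reach A x z" for z y
    using reach_trans[OF reach_sym[OF that], of y] reach_trans[OF that, of y] by (rule iffI)
  consider (u) "reach A x u" | (v) "\<not> reach A x u" "reach A x v" | "\<not> reach A x u" "\<not> reach A x v"
    by blast
  then show ?thesis
  proof cases
    case u
    then show ?thesis using same[OF u] by (simp add: reach_insert_iff set_eq_iff) blast
  next
    case v
    then show ?thesis using same[OF v(2)] by (simp add: reach_insert_iff set_eq_iff) blast
  qed (simp add: reach_insert_iff set_eq_iff)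
qed

lemma components_insert:
  assumes not_reach: "\<not> reach A u v" and "u \<in> V0" "v \<in> V0"
  shows "components (insert {u, v} A) V0 =
     insert (Collect (reach A u) \<union> Collect (reach A v))
       (components A V0 - {Collect (reach A u), Collect (reach A v)})"
    (is "?L = insert ?U (?S - {?Cu, ?Cv})")
proof (rule set_eqI)
  have "Collect (reach A x) = Collect (reach A z) \<longleftrightarrow> reach A x z" for x z
  proof
    assume "Collect (reach A x) = Collect (reach A z)"
    then show "reach A x z" using reach_refl[of A z] by blast
  qed (rule reach_class_eq)
  then have class_eq: "Collect (reach A x) \<in> {?Cu, ?Cv} \<longleftrightarrow> reach A x u \<or> reach A x v" for x
    by blast
  fix X
  show "X \<in> ?L \<longleftrightarrow> X \<in> insert ?U (?S - {?Cu, ?Cv})"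
  proof
    assume "X \<in> ?L"
    then obtain x where "x \<in> V0" "X = Collect (reach (insert {u, v} A) x)"
      unfolding components_def by blast
    then show "X \<in> insert ?U (?S - {?Cu, ?Cv})"
      using class_eq[of x] unfolding reach_insert_class components_def by auto
  next
    assume "X \<in> insert ?U (?S - {?Cu, ?Cv})"
    then consider "X = Collect (reach (insert {u, v} A) u)"
      | x where "x \<in> V0" "X = Collect (reach A x)" "\<not> reach A x u" "\<not> reach A x v"
      using class_eq unfolding reach_insert_class components_def by auto
    then show "X \<in> ?L"
      using \<open>u \<in> V0\<close> unfolding components_def reach_insert_class by cases auto
  qed
qed

text \<open>Every independent edge merges two components, so edges plus components are invariant.\<close>

lemma card_forest_add_card_components:
  assumes "finite A" "graphic_indep A" "\<forall>e\<in>A. card e = 2" "\<Union>A \<subseteq> V0" "finite V0"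
  shows "card A + card (components A V0) = card V0"
  using assms
proof (induction A rule: finite_induct)
  case empty
  have "Collect (reach {} x) = {x}" for x :: 'a
    unfolding reach_def by (auto elim: rtranclp.cases)
  then have "components {} V0 = (\<lambda>x. {x}) ` V0"
    unfolding components_def by simp
  moreover have "card ((\<lambda>x. {x}) ` V0) = card V0"
    by (rule card_image) (simp add: inj_on_def)
  ultimately show ?case by simp
next
  case (insert e A)
  obtain u v where e: "e = {u, v}" "u \<noteq> v"
    using insert.prems(2) card_2_iff by (metis insertCI)
  have IH: "card A + card (components A V0) = card V0"
    using insert graphic_indep_mono[OF insert.prems(1)] by blast
  have not_reach: "\<not> reach A u v"
    using not_reach_if_graphic_indep_insert insert.prems(1) insert.hyps(2) e(1) by metis
  have uv: "u \<in> V0" "v \<in> V0" using insert.prems(3) e by auto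
  let ?Cu = "Collect (reach A u)" and ?Cv = "Collect (reach A v)"
  have fin: "finite (components A V0)" unfolding components_def using insert.prems(4) by simp
  have sub: "{?Cu, ?Cv} \<subseteq> components A V0" using uv unfolding components_def by auto
  have neq: "?Cu \<noteq> ?Cv" using not_reach by (metis mem_Collect_eq reach_refl)
  have "?Cu \<union> ?Cv \<notin> components A V0 - {?Cu, ?Cv}"
  proof
    assume "?Cu \<union> ?Cv \<in> components A V0 - {?Cu, ?Cv}"
    then obtain z where z: "?Cu \<union> ?Cv = Collect (reach A z)" "Collect (reach A z) \<noteq> ?Cu"
      unfolding components_def by blast
    have "reach A z u" using z(1) by (metis UnI1 mem_Collect_eq reach_refl)
    then show False using z(2) reach_class_eq by metis
  qed
  moreover have two: "2 \<le> card (components A V0)"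
    using card_mono[OF fin sub] neq by simp
  ultimately have "card (components (insert e A) V0) = card (components A V0) - 1"
    unfolding e(1) components_insert[OF not_reach uv]
    using fin sub neq by (simp add: card_Diff_subset)
  then show ?case using IH insert.hyps two by simp
qed

lemma card_spanning_forest:
  assumes "finite A" "graphic_indep A" "\<forall>e\<in>A. card e = 2" "\<Union>A \<subseteq> V0" "finite V0"
    and "\<forall>x\<in>V0. \<forall>y\<in>V0. reach A x y" and "x0 \<in> V0"
  shows "card A = card V0 - 1"
proof -
  have "Collect (reach A x) = V0" if "x \<in> V0" for x
  proof
    show "Collect (reach A x) \<subseteq> V0"
    proof
      fix y assume "y \<in> Collect (reach A x)"
      then show "y \<in> V0" using reach_endpoints[of A x y] assms(4) that by auto
    qed
  qed (use assms(6) that in blast)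
  then have "components A V0 = {V0}"
    unfolding components_def using assms(7) by blast
  then show ?thesis using card_forest_add_card_components[OF assms(1-5)] by simp
qed

lemma ex_maximal_extension:
  assumes "finite S" "P I0" "I0 \<subseteq> S"
  obtains B where "I0 \<subseteq> B" "B \<subseteq> S" "P B" "\<forall>e\<in>S - B. \<not> P (insert e B)"
proof -
  let ?F = "{B. I0 \<subseteq> B \<and> B \<subseteq> S \<and> P B}"
  have fin: "finite ?F" using assms(1) by (rule rev_finite_subset[OF finite_Pow_iff[THEN iffD2]]) auto
  have ne: "?F \<noteq> {}" using assms(2,3) by blast
  obtain m where m: "m \<in> ?F" "\<forall>b\<in>?F. m \<le> b \<longrightarrow> m = b"
    using finite_has_maximal[OF fin ne] by blast
  have maximal: "\<not> P (insert e m)" if "e \<in> S - m" for e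
  proof
    assume "P (insert e m)"
    then have "insert e m \<in> ?F" using m(1) that by auto
    then show False using m(2) that by auto
  qed
  show ?thesis by (rule that[of m]) (use m(1) maximal in auto)
qed

lemma reach_if_maximal_graphic_indep:
  assumes "B \<subseteq> S" "graphic_indep B" "\<forall>e\<in>S - B. \<not> graphic_indep (insert e B)" "reach S x y"
  shows "reach B x y"
  using assms(4)
proof (rule reach_lift)
  fix a b assume "{a, b} \<in> S"
  show "reach B a b"
  proof (cases "{a, b} \<in> B")
    case False
    then have "\<not> graphic_indep (insert {a, b} B)" using \<open>{a, b} \<in> S\<close> assms(3) by simp
    then show ?thesis using graphic_indep_insert[OF assms(2)] by metis
  qed (rule reach_edge)
qed

lemma m_basis_if_spanning:
  assumes "\<forall>e\<in>E. card e = 2 \<and> e \<subseteq> V" "B \<subseteq> E" "graphic_indep B"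
    and "\<forall>x\<in>V. \<forall>y\<in>V. reach B x y"
  shows "m_basis E graphic_indep B"
  unfolding m_basis_def
proof (intro conjI ballI notI)
  fix e assume e: "e \<in> E - B" "graphic_indep (insert e B)"
  obtain p q where pq: "e = {p, q}" using assms(1) e(1) by (metis DiffD1 card_2_iff)
  have "reach B p q" using assms(1,4) e(1) pq by blast
  moreover have "insert e B - {{p, q}} = B" using e(1) pq by blast
  ultimately show False using e(2) pq unfolding graphic_indep_def by (metis insertI1)
qed (use assms(2,3) in auto)

lemma card_m_basis:
  assumes "simple_graph V E" "graph_connected V E" "x0 \<in> V" "m_basis E graphic_indep B"
  shows "card B = card V - 1"
proof -
  have B: "B \<subseteq> E" "graphic_indep B" "\<forall>e\<in>E - B. \<not> graphic_indep (insert e B)"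
    using assms(4) unfolding m_basis_def by auto
  have E: "\<forall>e\<in>E. card e = 2 \<and> e \<subseteq> V" "finite V" "finite E"
    using assms(1) unfolding simple_graph_def by (auto intro: finite_subset[of E "Pow V"])
  show ?thesis
  proof (rule card_spanning_forest[OF _ B(2) _ _ E(2) _ assms(3)])
    show "\<forall>x\<in>V. \<forall>y\<in>V. reach B x y"
      using assms(2) reach_if_maximal_graphic_indep[OF B] unfolding graph_connected_def by blast
    show "finite B" using B(1) E(3) finite_subset by blast
    show "\<forall>e\<in>B. card e = 2" "\<Union>B \<subseteq> V" using B(1) E(1) by auto
  qed
qed

section \<open>Deleting the apex keeps the graph biconnected\<close>

lemma ex_edge_to_vertex:
  assumes "\<forall>x\<in>W. \<forall>y\<in>W. reach F x y" "v \<in> W" "c \<in> W" "c \<noteq> v"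
  shows "\<exists>c'. reach {e \<in> F. v \<notin> e} c c' \<and> {v, c'} \<in> F"
proof (rule ccontr)
  let ?Fv = "{e \<in> F. v \<notin> e}"
  let ?A = "Collect (reach ?Fv c)"
  assume "\<not> ?thesis"
  then have no_edge: "{v, c'} \<notin> F" if "c' \<in> ?A" for c' using that by auto
  have "v \<notin> ?A" using reach_avoid[of ?Fv c v] assms(4) by auto
  have closed: "q \<in> ?A" if "{p, q} \<in> F" "p \<in> ?A" for p q
  proof (cases "v \<in> {p, q}")
    case True
    then have "{v, p} \<in> F" using that \<open>v \<notin> ?A\<close> by (auto simp: insert_commute)
    then show ?thesis using no_edge that(2) by blast
  next
    case False
    then show ?thesis using that reach_edge_trans[of ?Fv c p q] by auto
  qed
  have "reach F c v" using assms(1-3) by blast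
  then have "v \<in> ?A" using reach_closed[of F c v ?A] closed by simp
  then show False using \<open>v \<notin> ?A\<close> by blast
qed

lemma not_graphic_indep_fold:
  assumes "{p, q} \<in> X" "reach (C - {{p, q}}) p q" "\<pi> p = p" "\<pi> q = q"
    and "\<And>c d. {c, d} \<in> C - {{p, q}} \<Longrightarrow> \<pi> c = \<pi> d \<or> {\<pi> c, \<pi> d} \<in> X - {{p, q}}"
  shows "\<not> graphic_indep X"
proof -
  have "reach (X - {{p, q}}) (\<pi> p) (\<pi> q)"
  proof (rule reach_map[OF assms(2)])
    fix c d assume "{c, d} \<in> C - {{p, q}}"
    from assms(5)[OF this] show "reach (X - {{p, q}}) (\<pi> c) (\<pi> d)" by (auto intro: reach_edge)
  qed
  then show ?thesis using assms(1,3,4) unfolding graphic_indep_def by metis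
qed

text \<open>A graphic circuit cannot use edges on both sides of a vertex v that separates A from
  the rest: splitting it there gives two proper, hence independent, subsets, and the cycle
  through the dependent edge can be folded onto one of them by collapsing the other side to v.\<close>

lemma graphic_circuit_one_side:
  assumes circuit: "m_circuit E graphic_indep C" and "v \<notin> A"
    and sides: "\<And>e. e \<in> C \<Longrightarrow> e \<subseteq> insert v A \<or> e \<inter> A = {}"
  shows "C \<subseteq> {e. e \<subseteq> insert v A} \<or> C \<subseteq> {e. e \<inter> A = {}}"
proof (rule ccontr)
  assume both: "\<not> ?thesis"
  define X where "X = {e \<in> C. e \<subseteq> insert v A}"
  define Y where "Y = C - X"
  have "X \<subset> C" "Y \<subset> C" using both sides unfolding X_def Y_def by blast+
  then have indep: "graphic_indep X" "graphic_indep Y"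
    using circuit unfolding m_circuit_def by blast+
  have Y_outside: "c \<notin> A" "d \<notin> A" if "{c, d} \<in> Y" for c d
    using that sides unfolding X_def Y_def by auto
  have X_inside: "c \<in> insert v A" "d \<in> insert v A" if "{c, d} \<in> X" for c d
    using that unfolding X_def by auto
  have "\<not> graphic_indep C" using circuit unfolding m_circuit_def by blast
  then obtain p q where pq: "{p, q} \<in> C" "reach (C - {{p, q}}) p q"
    unfolding graphic_indep_def by blast
  show False
  proof (cases "{p, q} \<in> X")
    case True
    let ?\<pi> = "\<lambda>z. if z \<in> A then z else v"
    have "\<not> graphic_indep X"
    proof (rule not_graphic_indep_fold[OF True pq(2), of ?\<pi>])
      fix c d assume cd: "{c, d} \<in> C - {{p, q}}"
      show "?\<pi> c = ?\<pi> d \<or> {?\<pi> c, ?\<pi> d} \<in> X - {{p, q}}"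
      proof (cases "{c, d} \<in> X")
        case True
        then show ?thesis using X_inside[OF True] cd \<open>v \<notin> A\<close> by auto
      next
        case False
        then show ?thesis using Y_outside[of c d] cd unfolding Y_def by auto
      qed
    qed (use X_inside[OF True] \<open>v \<notin> A\<close> in auto)
    then show False using indep(1) by contradiction
  next
    case False
    then have pqY: "{p, q} \<in> Y" using pq(1) unfolding Y_def by blast
    let ?\<pi> = "\<lambda>z. if z \<in> A then v else z"
    have "\<not> graphic_indep Y"
    proof (rule not_graphic_indep_fold[OF pqY pq(2), of ?\<pi>])
      fix c d assume cd: "{c, d} \<in> C - {{p, q}}"
      show "?\<pi> c = ?\<pi> d \<or> {?\<pi> c, ?\<pi> d} \<in> Y - {{p, q}}"
      proof (cases "{c, d} \<in> X")
        case True
        then show ?thesis using X_inside[OF True] by auto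
      next
        case False
        then have "{c, d} \<in> Y" using cd unfolding Y_def by blast
        then show ?thesis using Y_outside[of c d] cd by auto
      qed
    qed (use Y_outside[OF pqY] in auto)
    then show False using indep(2) by contradiction
  qed
qed

lemma reach_avoiding_if_restriction_connected:
  assumes two: "\<forall>e\<in>F. card e = 2" and conn: "\<forall>x\<in>W. \<forall>y\<in>W. reach F x y"
    and rc: "restriction_connected E graphic_indep F"
    and "v \<in> W" "a \<in> W - {v}" "b \<in> W - {v}"
  shows "reach {e \<in> F. v \<notin> e} a b"
proof (rule ccontr)
  let ?Fv = "{e \<in> F. v \<notin> e}"
  define A where "A = Collect (reach ?Fv a)"
  assume not_reach: "\<not> reach ?Fv a b"
  have "v \<notin> A" using reach_avoid[of ?Fv a v] assms(5) unfolding A_def by auto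
  have closed: "q \<in> A" if "{p, q} \<in> F" "p \<in> A" "q \<noteq> v" for p q
  proof -
    have "p \<noteq> v" using that(2) \<open>v \<notin> A\<close> by blast
    then have "{p, q} \<in> ?Fv" using that(1,3) by simp
    then show ?thesis using that(2) reach_edge_trans unfolding A_def by fastforce
  qed
  obtain a' where a': "reach ?Fv a a'" "{v, a'} \<in> F"
    using ex_edge_to_vertex[OF conn assms(4), of a] assms(5) by auto
  obtain b' where b': "reach ?Fv b b'" "{v, b'} \<in> F"
    using ex_edge_to_vertex[OF conn assms(4), of b] assms(6) by auto
  have "a' \<in> A" using a'(1) unfolding A_def by simp
  have "b' \<notin> A"
  proof
    assume "b' \<in> A"
    then have "reach ?Fv a b'" unfolding A_def by simp
    from reach_trans[OF this reach_sym[OF b'(1)]] show False using not_reach by simp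
  qed
  have "b' \<noteq> v" using reach_avoid[OF b'(1)] assms(6) by auto
  then have "{v, a'} \<noteq> {v, b'}" using \<open>a' \<in> A\<close> \<open>b' \<notin> A\<close> by (auto simp: doubleton_eq_iff)
  then obtain C where C: "m_circuit E graphic_indep C" "C \<subseteq> F" "{v, a'} \<in> C" "{v, b'} \<in> C"
    using rc a'(2) b'(2) unfolding restriction_connected_def by meson
  have "e \<subseteq> insert v A \<or> e \<inter> A = {}" if "e \<in> C" for e
  proof -
    have "card e = 2" using two that C(2) by blast
    then obtain c d where cd: "e = {c, d}" by (meson card_2_iff)
    have "{c, d} \<in> F" "{d, c} \<in> F" using cd that C(2) by (auto simp: insert_commute)
    then show ?thesis using closed[of c d] closed[of d c] cd by blast
  qed
  moreover have "\<not> {v, b'} \<subseteq> insert v A" "{v, a'} \<inter> A \<noteq> {}"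
    using \<open>a' \<in> A\<close> \<open>b' \<notin> A\<close> \<open>b' \<noteq> v\<close> by auto
  ultimately show False using graphic_circuit_one_side[OF C(1) \<open>v \<notin> A\<close>] C(3,4) by blast
qed

lemma biconnected_delete_vertex_if_restriction_connected:
  assumes "simple_graph V E" "biconnected V E" "w \<in> V"
    and F_nonempty: "{e \<in> E. w \<notin> e} \<noteq> {}"
    and rc: "restriction_connected E graphic_indep {e \<in> E. w \<notin> e}"
  shows "biconnected (V - {w}) {e \<in> E. w \<notin> e}"
proof -
  let ?F = "{e \<in> E. w \<notin> e}" and ?W = "V - {w}"
  have E: "\<forall>e\<in>E. card e = 2 \<and> e \<subseteq> V" "finite V"
    using assms(1) unfolding simple_graph_def by auto
  obtain e0 where e0: "e0 \<in> ?F" using F_nonempty by blast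
  then have "card e0 \<le> card ?W" using E by (intro card_mono) auto
  then have "card ?W \<ge> 2" using e0 E by auto
  moreover have conn: "graph_connected ?W ?F"
    using assms(2,3) unfolding biconnected_def by blast
  moreover have "graph_connected (?W - {v}) {e \<in> ?F. v \<notin> e}" if "v \<in> ?W" for v
    unfolding graph_connected_def
  proof (intro ballI)
    fix a b assume "a \<in> ?W - {v}" "b \<in> ?W - {v}"
    moreover have "\<forall>e\<in>?F. card e = 2" "\<forall>x\<in>?W. \<forall>y\<in>?W. reach ?F x y"
      using E(1) conn unfolding graph_connected_def by auto
    ultimately show "reach {e \<in> ?F. v \<notin> e} a b"
      using reach_avoiding_if_restriction_connected[of ?F ?W E v a b] that rc by simp
  qed
  ultimately show ?thesis unfolding biconnected_def by blast
qed

section \<open>The levels of the flacet\<close>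

definition neighbours :: "'a set set \<Rightarrow> 'a \<Rightarrow> 'a set" where
  "neighbours E w = {x. {w, x} \<in> E}"

locale apex_graph =
  fixes V :: "'a set" and E :: "'a set set" and w :: 'a
  assumes simple: "simple_graph V E" and biconnected: "biconnected V E" and apex: "w \<in> V"
    and three_vertices: "3 \<le> card V"
begin

lemma edge: "e \<in> E \<Longrightarrow> card e = 2 \<and> e \<subseteq> V"
  using simple unfolding simple_graph_def by blast

lemma finite_vertices: "finite V"
  using simple unfolding simple_graph_def by blast

lemma finite_edges: "finite E"
  using finite_vertices edge by (meson Pow_iff finite_Pow_iff rev_finite_subset subsetI)

lemma connected: "graph_connected V E"
  using biconnected unfolding biconnected_def by blast

lemma connected_delete_apex: "graph_connected (V - {w}) {e \<in> E. w \<notin> e}"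
  using biconnected apex unfolding biconnected_def by blast

lemma neighbours_subset: "neighbours E w \<subseteq> V - {w}"
proof
  fix x assume "x \<in> neighbours E w"
  then have "card {w, x} = 2" "{w, x} \<subseteq> V" using edge unfolding neighbours_def by auto
  then show "x \<in> V - {w}" by (cases "x = w") auto
qed

lemma star_eq: "{e \<in> E. w \<in> e} = (\<lambda>x. {w, x}) ` neighbours E w"
proof (intro set_eqI iffI)
  fix e assume e: "e \<in> {e \<in> E. w \<in> e}"
  then have "card e = 2" using edge by blast
  then obtain u v where "e = {u, v}" by (meson card_2_iff)
  then have "e = {w, u} \<or> e = {w, v}" using e by auto
  then show "e \<in> (\<lambda>x. {w, x}) ` neighbours E w" using e unfolding neighbours_def by auto
qed (auto simp: neighbours_def)

lemma card_star: "card {e \<in> E. w \<in> e} = card (neighbours E w)"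
  unfolding star_eq by (rule card_image) (auto simp: inj_on_def doubleton_eq_iff)

lemma ex_neighbour_other:
  assumes "x \<in> V"
  shows "\<exists>y\<in>neighbours E w. y \<noteq> x"
proof -
  have "card {w, x} \<le> 2" by (simp add: card_insert_if)
  then have "card (V - {w, x}) \<noteq> 0"
    using three_vertices assms apex finite_vertices by (simp add: card_Diff_subset)
  then have "V - {w, x} \<noteq> {}" by (metis card.empty)
  then obtain y where y: "y \<in> V" "y \<noteq> w" "y \<noteq> x" by blast
  have "\<exists>e\<in>E. w \<in> e \<and> (x \<noteq> w \<longrightarrow> x \<notin> e)"
  proof (cases "x = w")
    case True
    have "reach E w y" using connected apex y unfolding graph_connected_def by blast
    from reach_endpoints[OF this] show ?thesis using True y(2) by blast
  next
    case False
    have "graph_connected (V - {x}) {e \<in> E. x \<notin> e}"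
      using biconnected assms unfolding biconnected_def by blast
    then have "reach {e \<in> E. x \<notin> e} w y" using apex y False unfolding graph_connected_def by blast
    from reach_endpoints[OF this] show ?thesis using y(2) by blast
  qed
  then obtain e where e: "e \<in> E" "w \<in> e" "x \<noteq> w \<Longrightarrow> x \<notin> e" by blast
  then have "e \<in> (\<lambda>x. {w, x}) ` neighbours E w" using star_eq by blast
  then obtain z where "e = {w, z}" "z \<in> neighbours E w" by blast
  moreover have "z \<noteq> w" using neighbours_subset calculation(2) by blast
  ultimately show ?thesis using e(3) by (cases "x = w") auto
qed

lemma m_basis_meets_star:
  assumes "m_basis E graphic_indep B"
  shows "B \<inter> {e \<in> E. w \<in> e} \<noteq> {}"
proof
  assume empty: "B \<inter> {e \<in> E. w \<in> e} = {}"
  obtain x where x: "x \<in> neighbours E w" using ex_neighbour_other[OF apex] by blast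
  then have "x \<noteq> w" using neighbours_subset by blast
  have B: "B \<subseteq> E" "graphic_indep B" "\<forall>e\<in>E - B. \<not> graphic_indep (insert e B)"
    using assms unfolding m_basis_def by auto
  have "{w, x} \<in> E - B" using empty x unfolding neighbours_def by blast
  moreover have "w \<notin> \<Union>B" using empty B(1) by blast
  then have "graphic_indep (insert {w, x} B)"
    using graphic_indep_insert_isolated[OF B(2)] \<open>x \<noteq> w\<close> by metis
  ultimately show False using B(3) by blast
qed

lemma card_m_basis_inter_flacet:
  assumes "m_basis E graphic_indep B"
  shows "card (B \<inter> {e \<in> E. w \<notin> e}) = card V - 1 - card (B \<inter> {e \<in> E. w \<in> e})"
proof -
  have B: "B \<subseteq> E" "finite B" using assms finite_edges finite_subset unfolding m_basis_def by auto
  have "B = (B \<inter> {e \<in> E. w \<notin> e}) \<union> (B \<inter> {e \<in> E. w \<in> e})" using B by blast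
  moreover have "card ((B \<inter> {e \<in> E. w \<notin> e}) \<union> (B \<inter> {e \<in> E. w \<in> e})) =
      card (B \<inter> {e \<in> E. w \<notin> e}) + card (B \<inter> {e \<in> E. w \<in> e})"
    by (rule card_Un_disjoint) (use B(2) in auto)
  ultimately have "card B = card (B \<inter> {e \<in> E. w \<notin> e}) + card (B \<inter> {e \<in> E. w \<in> e})"
    by simp
  then show ?thesis using card_m_basis[OF simple connected apex assms] by simp
qed

text \<open>Since deleting the apex leaves a connected graph, any nonempty independent set of
  star edges extends to a basis using flacet edges only.\<close>

lemma ex_m_basis_extending_star:
  assumes "graphic_indep I" "I \<subseteq> {e \<in> E. w \<in> e}" "{w, x} \<in> I"
  shows "\<exists>B. m_basis E graphic_indep B \<and> B \<inter> {e \<in> E. w \<in> e} = I"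
proof -
  let ?S = "I \<union> {e \<in> E. w \<notin> e}"
  have "finite ?S" using assms(2) finite_edges by (simp add: finite_subset)
  from ex_maximal_extension[of ?S graphic_indep I, OF this assms(1) Un_upper1]
  obtain B where B: "I \<subseteq> B" "B \<subseteq> ?S" "graphic_indep B"
      "\<forall>e\<in>?S - B. \<not> graphic_indep (insert e B)"
    by blast
  have "x \<in> V - {w}"
    using assms(2,3) neighbours_subset unfolding neighbours_def by auto
  have from_apex: "reach ?S w y" if "y \<in> V" for y
  proof (cases "y = w")
    case False
    then have "reach {e \<in> E. w \<notin> e} x y"
      using connected_delete_apex \<open>x \<in> V - {w}\<close> that unfolding graph_connected_def by blast
    then have "reach ?S x y" by (rule reach_mono) blast
    moreover have "reach ?S w x" using assms(3) by (simp add: reach_edge)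
    ultimately show ?thesis by (rule reach_trans[rotated])
  qed simp
  have spanning: "\<forall>y\<in>V. \<forall>z\<in>V. reach B y z"
  proof (intro ballI)
    fix y z assume "y \<in> V" "z \<in> V"
    then have "reach ?S y z" using reach_trans[OF reach_sym[OF from_apex[of y]] from_apex[of z]] by simp
    then show "reach B y z" by (rule reach_if_maximal_graphic_indep[OF B(2-4)])
  qed
  have "\<forall>e\<in>E. card e = 2 \<and> e \<subseteq> V" "B \<subseteq> E" using edge B(2) assms(2) by auto
  then have "m_basis E graphic_indep B" using m_basis_if_spanning B(3) spanning by blast
  moreover have "B \<inter> {e \<in> E. w \<in> e} = I" using B(1,2) assms(2) by blast
  ultimately show ?thesis by blast
qed

lemma flacet_values_subset:
  "{card (B \<inter> {e \<in> E. w \<notin> e}) | B. m_basis E graphic_indep B} \<subseteq>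
    (\<lambda>j. card V - 1 - j) ` {1..card (neighbours E w)}"
proof
  let ?star = "{e \<in> E. w \<in> e}"
  fix n assume "n \<in> {card (B \<inter> {e \<in> E. w \<notin> e}) | B. m_basis E graphic_indep B}"
  then obtain B where B: "m_basis E graphic_indep B" "n = card (B \<inter> {e \<in> E. w \<notin> e})" by blast
  have "finite ?star" using finite_edges by simp
  then have "1 \<le> card (B \<inter> ?star)" "card (B \<inter> ?star) \<le> card (neighbours E w)"
    using m_basis_meets_star[OF B(1)] card_star card_mono[of ?star "B \<inter> ?star"]
    by (auto simp: Suc_le_eq card_gt_0_iff)
  then show "n \<in> (\<lambda>j. card V - 1 - j) ` {1..card (neighbours E w)}"
    using B(2) card_m_basis_inter_flacet[OF B(1)] by auto
qed

text \<open>Bases with exactly one and exactly two star edges give the two values card V - 2 and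
  card V - 3.\<close>

lemma k_level_bounds:
  assumes "k_level E graphic_indep {e \<in> E. w \<notin> e} k"
  shows "2 \<le> k" "k \<le> card (neighbours E w)"
proof -
  let ?F = "{e \<in> E. w \<notin> e}" and ?star = "{e \<in> E. w \<in> e}" and ?d = "card (neighbours E w)"
  let ?values = "{card (B \<inter> ?F) | B. m_basis E graphic_indep B}"
  have k: "k = card ?values" using assms unfolding k_level_def by simp
  note sub = flacet_values_subset
  then show "k \<le> ?d"
    using card_mono[OF _ sub] card_image_le[of "{1..?d}" "\<lambda>j. card V - 1 - j"] k by simp
  obtain x1 where x1: "x1 \<in> neighbours E w" using ex_neighbour_other[OF apex] by blast
  then have "x1 \<in> V" "x1 \<noteq> w" using neighbours_subset by auto
  obtain x2 where x2: "x2 \<in> neighbours E w" "x2 \<noteq> x1"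
    using ex_neighbour_other[OF \<open>x1 \<in> V\<close>] by blast
  then have "x2 \<noteq> w" using neighbours_subset by auto
  have indep1: "graphic_indep {{w, x1}}"
    using graphic_indep_insert_isolated[of "{}" x1 w] \<open>x1 \<noteq> w\<close>
    by (simp add: graphic_indep_def insert_commute)
  have indep2: "graphic_indep {{w, x1}, {w, x2}}"
    using graphic_indep_insert_isolated[OF indep1, of x2 w] x2 \<open>x2 \<noteq> w\<close>
    by (simp add: insert_commute)
  obtain B1 where B1: "m_basis E graphic_indep B1" "B1 \<inter> ?star = {{w, x1}}"
    using ex_m_basis_extending_star[OF indep1] x1 unfolding neighbours_def by auto
  obtain B2 where B2: "m_basis E graphic_indep B2" "B2 \<inter> ?star = {{w, x1}, {w, x2}}"
    using ex_m_basis_extending_star[OF indep2] x1 x2 unfolding neighbours_def by auto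
  have "card {{w, x1}, {w, x2}} = 2" using x2 by (auto simp: doubleton_eq_iff)
  then have "card (B1 \<inter> ?F) = card V - 2" "card (B2 \<inter> ?F) = card V - 3"
    using card_m_basis_inter_flacet[OF B1(1)] card_m_basis_inter_flacet[OF B2(1)] B1(2) B2(2)
    by simp_all
  moreover have "card (B1 \<inter> ?F) \<in> ?values" "card (B2 \<inter> ?F) \<in> ?values"
    using B1(1) B2(1) by blast+
  ultimately have "{card V - 2, card V - 3} \<subseteq> ?values" by simp
  moreover have "finite ?values" using sub finite_subset by blast
  ultimately have "card {card V - 2, card V - 3} \<le> k"
    unfolding k by (rule card_mono[rotated])
  then show "2 \<le> k" using three_vertices by simp
qed

end

section \<open>Contracting an edge\<close>

definition merge :: "'a \<Rightarrow> 'a \<Rightarrow> 'a \<Rightarrow> 'a" where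
  "merge x y z = (if z = x then y else z)"

definition contract :: "'a set set \<Rightarrow> 'a \<Rightarrow> 'a \<Rightarrow> 'a set set" where
  "contract D x y = image (merge x y) ` (D - {{x, y}})"

lemma merge_image_eq: "x \<notin> e \<Longrightarrow> merge x y ` e = e"
  unfolding merge_def by (auto simp: image_def)

lemma contract_edge_cases:
  assumes "card e = 2" "e \<noteq> {x, y}"
  obtains "x \<notin> e" "merge x y ` e = e"
    | q where "e = {x, q}" "q \<noteq> x" "q \<noteq> y" "merge x y ` e = {y, q}"
proof (cases "x \<in> e")
  case True
  obtain u v where uv: "e = {u, v}" "u \<noteq> v" using assms(1) by (meson card_2_iff)
  define q where "q = (if u = x then v else u)"
  have q: "e = {x, q}" "q \<noteq> x" using uv True unfolding q_def by auto
  then have "q \<noteq> y" using assms(2) by blast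
  moreover have "merge x y ` e = {y, q}" using q unfolding merge_def by auto
  ultimately show ?thesis using that(2)[OF q] by blast
next
  case False
  show ?thesis using that(1)[OF False merge_image_eq[OF False]] .
qed

lemma contract_obtain:
  assumes "e' \<in> contract D x y"
  obtains e where "e \<in> D" "e \<noteq> {x, y}" "e' = merge x y ` e"
  using assms unfolding contract_def by blast

lemma merge_mem_contract:
  "{a, b} \<in> D \<Longrightarrow> {a, b} \<noteq> {x, y} \<Longrightarrow> {merge x y a, merge x y b} \<in> contract D x y"
  unfolding contract_def by (metis (no_types, lifting) DiffI image_empty image_eqI image_insert
      singletonD)

lemma merge_eq_if_contracted: "{a, b} = {x, y} \<Longrightarrow> merge x y a = merge x y b"
  unfolding merge_def by (auto simp: doubleton_eq_iff)

lemma simple_graph_contract: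
  assumes "simple_graph W D" "{x, y} \<in> D"
  shows "simple_graph (W - {x}) (contract D x y)"
  unfolding simple_graph_def
proof (intro conjI ballI)
  have edges: "\<forall>e\<in>D. e \<subseteq> W \<and> card e = 2" "finite W" using assms(1) unfolding simple_graph_def by auto
  then show "finite (W - {x})" by simp
  have "y \<in> W" "y \<noteq> x" using assms(2) edges(1) by (auto simp: card_2_iff)
  fix e' assume "e' \<in> contract D x y"
  then obtain e where e: "e \<in> D" "e \<noteq> {x, y}" "e' = merge x y ` e" by (rule contract_obtain)
  have "card e = 2" using edges(1) e(1) by blast
  then have "card e' = 2 \<and> e' \<subseteq> W - {x}"
    by (rule contract_edge_cases[OF _ e(2)]) (use e edges(1) \<open>y \<in> W\<close> \<open>y \<noteq> x\<close> in auto)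
  then show "card e' = 2" "e' \<subseteq> W - {x}" by auto
qed

lemma graph_connected_contract_avoiding:
  assumes connected: "graph_connected (W - {z}) {e \<in> D. z \<notin> e}" and "z \<noteq> y"
  shows "graph_connected (W - {x} - {z}) {e \<in> contract D x y. z \<notin> e}"
  unfolding graph_connected_def
proof (intro ballI)
  fix p q assume pq: "p \<in> W - {x} - {z}" "q \<in> W - {x} - {z}"
  then have "reach {e \<in> D. z \<notin> e} p q" using connected unfolding graph_connected_def by blast
  then have "reach {e \<in> contract D x y. z \<notin> e} (merge x y p) (merge x y q)"
  proof (rule reach_map)
    fix a b assume ab: "{a, b} \<in> {e \<in> D. z \<notin> e}"
    then have "z \<notin> {merge x y a, merge x y b}" using \<open>z \<noteq> y\<close> unfolding merge_def by auto
    then show "reach {e \<in> contract D x y. z \<notin> e} (merge x y a) (merge x y b)"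
      using merge_mem_contract[of a b D x y] merge_eq_if_contracted[of a b x y] ab
      by (cases "{a, b} = {x, y}") (auto intro: reach_edge)
  qed
  moreover have "merge x y p = p" "merge x y q = q" using pq unfolding merge_def by auto
  ultimately show "reach {e \<in> contract D x y. z \<notin> e} p q" by simp
qed

text \<open>Deleting y from the contraction is deleting both x and y from the original graph; deleting
  any other vertex z commutes with the contraction.\<close>

lemma biconnected_contract:
  assumes simple: "simple_graph W D" and bic: "biconnected W D" and xy: "{x, y} \<in> D"
    and "3 \<le> card W"
    and connected: "graph_connected (W - {x, y}) {e \<in> D. x \<notin> e \<and> y \<notin> e}"
  shows "biconnected (W - {x}) (contract D x y)"
proof -
  have "finite W" "x \<in> W" "x \<noteq> y" using simple xy unfolding simple_graph_def by (auto simp: card_2_iff)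
  then have "card (W - {x}) \<ge> 2" using assms(4) by (simp add: card_Diff_singleton)
  have avoid: "graph_connected (W - {x} - {z}) {e \<in> contract D x y. z \<notin> e}" if "z \<in> W" "z \<noteq> y" for z
  proof -
    have "graph_connected (W - {z}) {e \<in> D. z \<notin> e}" using bic that(1) unfolding biconnected_def by blast
    then show ?thesis using that(2) by (rule graph_connected_contract_avoiding)
  qed
  have "graph_connected (W - {x}) {e \<in> contract D x y. x \<notin> e}"
    using avoid[OF \<open>x \<in> W\<close> \<open>x \<noteq> y\<close>] by simp
  then have "graph_connected (W - {x}) (contract D x y)" by (rule graph_connected_mono) blast
  moreover have "graph_connected (W - {x} - {y}) {e \<in> contract D x y. y \<notin> e}"
  proof -
    have "{e \<in> D. x \<notin> e \<and> y \<notin> e} \<subseteq> {e \<in> contract D x y. y \<notin> e}"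
    proof
      fix e assume e: "e \<in> {e \<in> D. x \<notin> e \<and> y \<notin> e}"
      then have "e \<in> D - {{x, y}}" "e = merge x y ` e" using merge_image_eq[of x e y] by auto
      then show "e \<in> {e \<in> contract D x y. y \<notin> e}" using e unfolding contract_def by blast
    qed
    moreover have "W - {x} - {y} = W - {x, y}" by blast
    ultimately show ?thesis using graph_connected_mono[OF connected] by simp
  qed
  moreover have "graph_connected (W - {x} - {z}) {e \<in> contract D x y. z \<notin> e}"
    if "z \<in> W - {x}" "z \<noteq> y" for z
    using avoid that by blast
  ultimately show ?thesis
    using \<open>card (W - {x}) \<ge> 2\<close> unfolding biconnected_def by blast
qed

lemma mem_contractD:
  assumes "{a, b} \<in> contract D x y" "\<forall>e\<in>D. card e = 2"
  shows "{a, b} \<in> D \<or> (a = y \<and> {x, b} \<in> D) \<or> (b = y \<and> {x, a} \<in> D)"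
proof -
  obtain e where e: "e \<in> D" "e \<noteq> {x, y}" "{a, b} = merge x y ` e"
    using assms(1) by (rule contract_obtain)
  have "card e = 2" using assms(2) e(1) by blast
  then show ?thesis
  proof (rule contract_edge_cases[OF _ e(2)])
    assume "merge x y ` e = e"
    then show ?thesis using e by simp
  next
    fix q assume "e = {x, q}" "merge x y ` e = {y, q}"
    then show ?thesis using e by (auto simp: doubleton_eq_iff insert_commute)
  qed
qed

section \<open>Contractible edges at a vertex\<close>

definition component_avoiding :: "'a set \<Rightarrow> 'a set set \<Rightarrow> 'a \<Rightarrow> 'a \<Rightarrow> 'a \<Rightarrow> 'a set" where
  "component_avoiding W D x y a = {b \<in> W - {x, y}. reach {e \<in> D. x \<notin> e \<and> y \<notin> e} a b}"

lemma component_avoiding_commute: "component_avoiding W D x y = component_avoiding W D y x"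
  unfolding component_avoiding_def by (simp add: insert_commute conj_commute)

lemma component_avoiding_subset: "component_avoiding W D x y a \<subseteq> W - {x, y}"
  unfolding component_avoiding_def by blast

lemma self_in_component_avoiding: "a \<in> W - {x, y} \<Longrightarrow> a \<in> component_avoiding W D x y a"
  unfolding component_avoiding_def by simp

lemma component_avoiding_closed:
  assumes "\<forall>e\<in>D. e \<subseteq> W" "{p, q} \<in> D" "x \<notin> {p, q}" "y \<notin> {p, q}"
    and "p \<in> component_avoiding W D x y a"
  shows "q \<in> component_avoiding W D x y a"
proof -
  have "reach {e \<in> D. x \<notin> e \<and> y \<notin> e} a p" using assms(5) unfolding component_avoiding_def by simp
  moreover have "{p, q} \<in> {e \<in> D. x \<notin> e \<and> y \<notin> e}" using assms(2-4) by simp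
  ultimately have "reach {e \<in> D. x \<notin> e \<and> y \<notin> e} a q" by (rule reach_edge_trans)
  moreover have "q \<in> W - {x, y}" using assms(1-4) by auto
  ultimately show ?thesis unfolding component_avoiding_def by simp
qed

lemma component_avoiding_eq:
  assumes "b \<in> component_avoiding W D x y a"
  shows "component_avoiding W D x y b = component_avoiding W D x y a"
proof -
  let ?D = "{e \<in> D. x \<notin> e \<and> y \<notin> e}"
  have ab: "reach ?D a b" using assms unfolding component_avoiding_def by simp
  have "reach ?D b c \<longleftrightarrow> reach ?D a c" for c
    using reach_trans[OF ab, of c] reach_trans[OF reach_sym[OF ab], of c] by blast
  then show ?thesis unfolding component_avoiding_def by simp
qed

lemma ex_component_avoiding_missing:
  assumes "\<not> graph_connected (W - {x, y}) {e \<in> D. x \<notin> e \<and> y \<notin> e}" "z \<in> W - {x, y}"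
  shows "\<exists>a\<in>W - {x, y}. z \<notin> component_avoiding W D x y a"
proof -
  obtain p q where pq: "p \<in> W - {x, y}" "q \<in> W - {x, y}"
      "\<not> reach {e \<in> D. x \<notin> e \<and> y \<notin> e} p q"
    using assms(1) unfolding graph_connected_def by blast
  have "q \<notin> component_avoiding W D x y p" using pq(3) unfolding component_avoiding_def by simp
  moreover have "q \<in> component_avoiding W D x y q" using pq(2) by (rule self_in_component_avoiding)
  ultimately have "z \<notin> component_avoiding W D x y p \<or> z \<notin> component_avoiding W D x y q"
    using component_avoiding_eq[of z W D x y p] component_avoiding_eq[of z W D x y q] by auto
  then show ?thesis using pq(1,2) by blast
qed

text \<open>Since G - y is connected, a component of G - x - y that is not everything is entered
  by an edge from x.\<close>

lemma ex_edge_into_component_avoiding: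
  assumes "biconnected W D" "\<forall>e\<in>D. e \<subseteq> W" "y \<in> W" "a \<in> W - {x, y}"
    and "d \<in> W - {x, y}" "d \<notin> component_avoiding W D x y a"
  shows "\<exists>c\<in>component_avoiding W D x y a. {x, c} \<in> D"
proof (rule ccontr)
  let ?C = "component_avoiding W D x y a"
  assume no_edge: "\<not> ?thesis"
  have closed: "q \<in> ?C" if "{p, q} \<in> {e \<in> D. y \<notin> e}" "p \<in> ?C" for p q
  proof -
    have "p \<noteq> x" "p \<noteq> y" "q \<noteq> y"
      using that component_avoiding_subset[of W D x y a] by auto
    moreover have "q \<noteq> x" using that no_edge by (auto simp: insert_commute)
    ultimately show ?thesis using component_avoiding_closed[OF assms(2)] that by simp
  qed
  have "reach {e \<in> D. y \<notin> e} a d"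
    using assms(1,3-5) unfolding biconnected_def graph_connected_def by blast
  then have "d \<in> ?C" using self_in_component_avoiding[OF assms(4)] by (rule reach_closed[OF _ _ closed])
  then show False using assms(6) by blast
qed

lemma component_avoiding_mono:
  assumes "\<forall>e\<in>D. e \<subseteq> W" "y' \<in> component_avoiding W D x y a" "{c, y'} \<in> D"
    and "c \<in> component_avoiding W D x y' a'" "y \<notin> component_avoiding W D x y' a'"
  shows "component_avoiding W D x y' a' \<subseteq> component_avoiding W D x y a"
proof
  let ?D' = "{e \<in> D. x \<notin> e \<and> y' \<notin> e}" and ?C' = "component_avoiding W D x y' a'"
  fix b assume "b \<in> ?C'"
  have "x \<noteq> c" "y \<noteq> c" "x \<noteq> y'" "y \<noteq> y'"
    using assms(2,4,5) component_avoiding_subset[of W D x y' a']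
      component_avoiding_subset[of W D x y a] by auto
  then have "c \<in> component_avoiding W D x y a"
    using component_avoiding_closed[OF assms(1), of y' c x y a] assms(2,3)
    by (simp add: insert_commute)
  then have to_c: "reach {e \<in> D. x \<notin> e \<and> y \<notin> e} a c"
    unfolding component_avoiding_def by simp
  have "reach ?D' a' c" "reach ?D' a' b"
    using assms(4) \<open>b \<in> ?C'\<close> unfolding component_avoiding_def by simp_all
  then have "reach ?D' c b" by (elim reach_trans[OF reach_sym])
  moreover have "q \<in> ?C'" if "{p, q} \<in> ?D'" "p \<in> ?C'" for p q
    using component_avoiding_closed[OF assms(1), of p q x y' a'] that by simp
  ultimately have "reach {e \<in> ?D'. e \<subseteq> ?C'} c b" using reach_restrict[OF _ assms(4)] by blast
  moreover have "{e \<in> ?D'. e \<subseteq> ?C'} \<subseteq> {e \<in> D. x \<notin> e \<and> y \<notin> e}" using assms(5) by blast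
  ultimately have "reach {e \<in> D. x \<notin> e \<and> y \<notin> e} c b" by (rule reach_mono)
  with to_c have "reach {e \<in> D. x \<notin> e \<and> y \<notin> e} a b" by (rule reach_trans)
  moreover have "b \<in> W - {x, y}"
    using \<open>b \<in> ?C'\<close> assms(5) component_avoiding_subset[of W D x y' a'] by auto
  ultimately show "b \<in> component_avoiding W D x y a" unfolding component_avoiding_def by simp
qed

lemma ex_edge_at_vertex:
  assumes "simple_graph W D" "graph_connected W D" "x \<in> W" "z \<in> W" "z \<noteq> x"
  shows "\<exists>y. {x, y} \<in> D"
proof -
  have "reach D x z" using assms(2-4) unfolding graph_connected_def by blast
  then obtain e where "e \<in> D" "x \<in> e" using reach_endpoints[of D x z] assms(5) by blast
  moreover have "card e = 2" using assms(1) \<open>e \<in> D\<close> unfolding simple_graph_def by blast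
  ultimately show ?thesis by (metis card_2_iff insert_commute insert_iff singletonD)
qed

text \<open>If no edge at x were contractible, every component of G - x - y for a neighbour y
  would contain a strictly smaller such component: x has a neighbour y' in it, and a component
  of G - x - y' missing y lies inside it.\<close>

lemma smaller_component_avoiding:
  assumes simple: "simple_graph W D" and bic: "biconnected W D" and "x \<in> W"
    and no_contractible: "\<And>y. {x, y} \<in> D \<Longrightarrow> \<not> graph_connected (W - {x, y}) {e \<in> D. x \<notin> e \<and> y \<notin> e}"
    and xy: "{x, y} \<in> D" and a: "a \<in> W - {x, y}"
    and d: "d \<in> W - {x, y}" "d \<notin> component_avoiding W D x y a"
  shows "\<exists>y' a'. {x, y'} \<in> D \<and> a' \<in> W - {x, y'} \<and> y \<in> W - {x, y'} \<and>
    y \<notin> component_avoiding W D x y' a' \<and>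
    component_avoiding W D x y' a' \<subset> component_avoiding W D x y a"
proof -
  let ?C = "component_avoiding W D x y a"
  have edges: "\<forall>e\<in>D. e \<subseteq> W" using simple unfolding simple_graph_def by blast
  have "y \<in> W" "y \<noteq> x" using xy simple unfolding simple_graph_def by (auto simp: card_2_iff)
  obtain y' where y': "y' \<in> ?C" "{x, y'} \<in> D"
    using ex_edge_into_component_avoiding[OF bic edges \<open>y \<in> W\<close> a d] by blast
  then have "y \<in> W - {x, y'}" using \<open>y \<in> W\<close> \<open>y \<noteq> x\<close> component_avoiding_subset[of W D x y a] by auto
  then obtain a' where a': "a' \<in> W - {x, y'}" "y \<notin> component_avoiding W D x y' a'"
    using ex_component_avoiding_missing[OF no_contractible[OF y'(2)]] by blast
  let ?C' = "component_avoiding W D x y' a'"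
  obtain c where c: "c \<in> ?C'" "{y', c} \<in> D"
    using ex_edge_into_component_avoiding[OF bic edges \<open>x \<in> W\<close>, of a' y' y]
      a' \<open>y \<in> W - {x, y'}\<close> component_avoiding_commute[of W D x y'] by (auto simp: insert_commute)
  have "?C' \<subseteq> ?C"
    using component_avoiding_mono[OF edges y'(1) _ c(1) a'(2)] c(2) by (simp add: insert_commute)
  moreover have "y' \<notin> ?C'" using component_avoiding_subset[of W D x y' a'] by blast
  ultimately show ?thesis using y' a' \<open>y \<in> W - {x, y'}\<close> by blast
qed

lemma ex_contractible_edge:
  assumes simple: "simple_graph W D" and bic: "biconnected W D" and "x \<in> W" "3 \<le> card W"
  shows "\<exists>y. {x, y} \<in> D \<and> graph_connected (W - {x, y}) {e \<in> D. x \<notin> e \<and> y \<notin> e}"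
proof (rule ccontr)
  assume "\<not> ?thesis"
  then have no_contractible:
    "\<And>y. {x, y} \<in> D \<Longrightarrow> \<not> graph_connected (W - {x, y}) {e \<in> D. x \<notin> e \<and> y \<notin> e}" by blast
  define bad where "bad C \<longleftrightarrow> (\<exists>y a. {x, y} \<in> D \<and> a \<in> W - {x, y} \<and>
    C = component_avoiding W D x y a \<and> (\<exists>d\<in>W - {x, y}. d \<notin> C))" for C
  have "finite W" using simple unfolding simple_graph_def by blast
  have no_bad: "\<not> bad C" if "C \<subseteq> W" for C
    using finite_subset[OF that \<open>finite W\<close>] that
  proof (induction C rule: finite_psubset_induct)
    case (psubset C)
    show ?case
    proof
      assume "bad C"
      then obtain y a d where "{x, y} \<in> D" "a \<in> W - {x, y}" "C = component_avoiding W D x y a"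
          "d \<in> W - {x, y}" "d \<notin> C"
        unfolding bad_def by blast
      then obtain y' a' where "{x, y'} \<in> D" "a' \<in> W - {x, y'}" "y \<in> W - {x, y'}"
          "y \<notin> component_avoiding W D x y' a'" "component_avoiding W D x y' a' \<subset> C"
        using smaller_component_avoiding[OF simple bic \<open>x \<in> W\<close> no_contractible] by blast
      then have "bad (component_avoiding W D x y' a')" unfolding bad_def by blast
      then show False using psubset.IH \<open>_ \<subset> C\<close> psubset.prems by blast
    qed
  qed
  have "card (W - {x}) \<ge> 2" using assms(3,4) \<open>finite W\<close> by (simp add: card_Diff_singleton)
  then obtain z where "z \<in> W - {x}" by (metis all_not_in_conv card.empty not_numeral_le_zero)
  then obtain y where y: "{x, y} \<in> D"
    using ex_edge_at_vertex[OF simple _ \<open>x \<in> W\<close>] bic unfolding biconnected_def by blast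
  then have "{x, y} \<subseteq> W" "card {x, y} = 2" using simple unfolding simple_graph_def by auto
  then have "card (W - {x, y}) \<noteq> 0"
    using assms(4) \<open>finite W\<close> by (simp add: card_Diff_subset)
  then obtain z' where "z' \<in> W - {x, y}" by (metis all_not_in_conv card.empty)
  then obtain a where "a \<in> W - {x, y}" "z' \<notin> component_avoiding W D x y a"
    using ex_component_avoiding_missing[OF no_contractible[OF y]] by blast
  then have "bad (component_avoiding W D x y a)" unfolding bad_def using y \<open>z' \<in> _\<close> by blast
  then show False using no_bad component_avoiding_subset[of W D x y a] by blast
qed

section \<open>Rooted minors\<close>

definition rooted_minor :: "'a set \<Rightarrow> 'a set set \<Rightarrow> 'a set \<Rightarrow> 'a set set \<Rightarrow> bool" where
  "rooted_minor W D N DN \<longleftrightarrow> (\<exists>X.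
     (\<forall>v\<in>N. v \<in> X v \<and> X v \<subseteq> W \<and> graph_connected (X v) {e \<in> D. e \<subseteq> X v}) \<and>
     (\<forall>u\<in>N. \<forall>v\<in>N. u \<noteq> v \<longrightarrow> X u \<inter> X v = {}) \<and>
     (\<forall>u v. {u, v} \<in> DN \<longrightarrow> (\<exists>a\<in>X u. \<exists>b\<in>X v. {a, b} \<in> D)))"

lemma rooted_minor_refl: "rooted_minor W D W D"
  unfolding rooted_minor_def
proof (intro exI[of _ "\<lambda>v. {v}"] conjI ballI allI impI)
  show "graph_connected {v} {e \<in> D. e \<subseteq> {v}}" for v
    unfolding graph_connected_def by simp
qed auto

lemma rooted_minor_subgraph:
  assumes "rooted_minor W D N DN" "DN' \<subseteq> DN"
  shows "rooted_minor W D N DN'"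
proof -
  obtain X where "\<forall>v\<in>N. v \<in> X v \<and> X v \<subseteq> W \<and> graph_connected (X v) {e \<in> D. e \<subseteq> X v}"
      "\<forall>u\<in>N. \<forall>v\<in>N. u \<noteq> v \<longrightarrow> X u \<inter> X v = {}"
      "\<forall>u v. {u, v} \<in> DN \<longrightarrow> (\<exists>a\<in>X u. \<exists>b\<in>X v. {a, b} \<in> D)"
    using assms(1) unfolding rooted_minor_def by blast
  moreover have "\<forall>u v. {u, v} \<in> DN' \<longrightarrow> (\<exists>a\<in>X u. \<exists>b\<in>X v. {a, b} \<in> D)"
    using calculation(3) assms(2) by blast
  ultimately show ?thesis unfolding rooted_minor_def by blast
qed

definition uncontract :: "'a \<Rightarrow> 'a \<Rightarrow> 'a set \<Rightarrow> 'a set" where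
  "uncontract x y X = (if y \<in> X then insert x X else X)"

lemma graph_connected_uncontract:
  assumes simple: "simple_graph W D" and xy: "{x, y} \<in> D" and "v \<in> X"
    and connected: "graph_connected X {e \<in> contract D x y. e \<subseteq> X}"
  shows "graph_connected (uncontract x y X) {e \<in> D. e \<subseteq> uncontract x y X}"
proof -
  let ?Z = "uncontract x y X"
  let ?T = "{e \<in> D. e \<subseteq> ?Z}"
  have two: "\<forall>e\<in>D. card e = 2" using simple unfolding simple_graph_def by blast
  have "X \<subseteq> ?Z" unfolding uncontract_def by auto
  have yx: "reach ?T y x" if "y \<in> X"
    using xy that unfolding uncontract_def by (auto simp: insert_commute intro: reach_edge)
  have lift: "reach ?T a b" if ab: "{a, b} \<in> {e \<in> contract D x y. e \<subseteq> X}" for a b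
  proof -
    have "a \<in> X" "b \<in> X" using ab by auto
    then have "{x, a} \<subseteq> ?Z" "{x, b} \<subseteq> ?Z" if "y \<in> X" using that unfolding uncontract_def by auto
    then show ?thesis
      using mem_contractD[OF _ two, of a b x y] ab \<open>X \<subseteq> ?Z\<close> yx
      by (auto intro: reach_edge reach_trans reach_edge_trans reach_sym)
  qed
  have to_v: "reach ?T p v" if "p \<in> ?Z" for p
  proof (cases "p \<in> X")
    case True
    then have "reach {e \<in> contract D x y. e \<subseteq> X} p v"
      using connected \<open>v \<in> X\<close> unfolding graph_connected_def by blast
    then show ?thesis using lift by (rule reach_lift)
  next
    case False
    then have "p = x" "y \<in> X" using that unfolding uncontract_def by (auto split: if_splits)
    moreover have "reach {e \<in> contract D x y. e \<subseteq> X} y v"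
      using connected \<open>v \<in> X\<close> \<open>y \<in> X\<close> unfolding graph_connected_def by blast
    then have "reach ?T y v" using lift by (rule reach_lift)
    ultimately show ?thesis using reach_trans[OF reach_sym[OF yx]] by blast
  qed
  show ?thesis unfolding graph_connected_def
    using reach_trans[OF to_v reach_sym[OF to_v]] by blast
qed

lemma edge_uncontract:
  assumes "simple_graph W D" "{a, b} \<in> contract D x y" "a \<in> X" "b \<in> Y"
  shows "\<exists>a'\<in>uncontract x y X. \<exists>b'\<in>uncontract x y Y. {a', b'} \<in> D"
  using mem_contractD[OF assms(2)] assms(1,3,4) unfolding simple_graph_def uncontract_def
  by (auto simp: insert_commute)

lemma rooted_minor_uncontract:
  assumes simple: "simple_graph W D" and xy: "{x, y} \<in> D"
    and minor: "rooted_minor (W - {x}) (contract D x y) N DN"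
  shows "rooted_minor W D N DN"
proof -
  obtain X where
    branch: "\<forall>v\<in>N. v \<in> X v \<and> X v \<subseteq> W - {x} \<and>
      graph_connected (X v) {e \<in> contract D x y. e \<subseteq> X v}" and
    disjoint: "\<forall>u\<in>N. \<forall>v\<in>N. u \<noteq> v \<longrightarrow> X u \<inter> X v = {}" and
    edges: "\<forall>u v. {u, v} \<in> DN \<longrightarrow> (\<exists>a\<in>X u. \<exists>b\<in>X v. {a, b} \<in> contract D x y)"
    using minor unfolding rooted_minor_def by blast
  have "x \<in> W" using simple xy unfolding simple_graph_def by blast
  show ?thesis
    unfolding rooted_minor_def
  proof (intro exI[of _ "\<lambda>v. uncontract x y (X v)"] conjI ballI allI impI)
    fix v assume "v \<in> N"
    then show "v \<in> uncontract x y (X v)" "uncontract x y (X v) \<subseteq> W"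
      using branch \<open>x \<in> W\<close> unfolding uncontract_def by auto
    show "graph_connected (uncontract x y (X v)) {e \<in> D. e \<subseteq> uncontract x y (X v)}"
      using graph_connected_uncontract[OF simple xy] branch \<open>v \<in> N\<close> by blast
  next
    fix u v assume "u \<in> N" "v \<in> N" "u \<noteq> v"
    then show "uncontract x y (X u) \<inter> uncontract x y (X v) = {}"
      using disjoint branch unfolding uncontract_def by auto
  next
    fix u v assume "{u, v} \<in> DN"
    then obtain a b where "{a, b} \<in> contract D x y" "a \<in> X u" "b \<in> X v" using edges by blast
    then show "\<exists>a\<in>uncontract x y (X u). \<exists>b\<in>uncontract x y (X v). {a, b} \<in> D"
      by (rule edge_uncontract[OF simple])
  qed
qed

lemma ex_biconnected_rooted_minor:
  assumes "simple_graph W D" "biconnected W D" "N \<subseteq> W" "2 \<le> card N"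
  shows "\<exists>DN. simple_graph N DN \<and> biconnected N DN \<and> rooted_minor W D N DN"
  using assms
proof (induction "card (W - N)" arbitrary: W D)
  case 0
  then have "W = N" unfolding simple_graph_def by auto
  then show ?case using 0 rooted_minor_refl by blast
next
  case (Suc n)
  have "finite W" using Suc.prems(1) unfolding simple_graph_def by blast
  obtain x where x: "x \<in> W" "x \<notin> N" using Suc.hyps(2) by (metis Diff_eq_empty_iff card.empty
        nat.distinct(1) subsetI)
  have "N \<subseteq> W - {x}" using Suc.prems(3) x by blast
  then have "card N \<le> card (W - {x})" using \<open>finite W\<close> by (intro card_mono) auto
  then have "3 \<le> card W" using Suc.prems(4) x \<open>finite W\<close> by (simp add: card_Diff_singleton)
  then obtain y where y: "{x, y} \<in> D" "graph_connected (W - {x, y}) {e \<in> D. x \<notin> e \<and> y \<notin> e}"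
    using ex_contractible_edge[OF Suc.prems(1,2) x(1)] by blast
  have "n = card (W - {x} - N)" using Suc.hyps(2) x by (simp add: Diff_insert2[symmetric])
  then obtain DN where "simple_graph N DN" "biconnected N DN"
      "rooted_minor (W - {x}) (contract D x y) N DN"
    using Suc.hyps(1) simple_graph_contract[OF Suc.prems(1) y(1)]
      biconnected_contract[OF Suc.prems(1,2) y(1) \<open>3 \<le> card W\<close> y(2)]
      \<open>N \<subseteq> W - {x}\<close> Suc.prems(4) by blast
  then show ?case using rooted_minor_uncontract[OF Suc.prems(1) y(1)] by blast
qed

lemma ex_minimally_biconnected_subgraph:
  assumes "simple_graph N DN" "biconnected N DN"
  shows "\<exists>D0\<subseteq>DN. minimally_biconnected N D0 \<and> simple_graph N D0"
proof -
  let ?F = "{D0. D0 \<subseteq> DN \<and> biconnected N D0}"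
  have "finite DN" using assms(1) unfolding simple_graph_def
    by (meson Pow_iff finite_Pow_iff rev_finite_subset subsetI)
  then have fin: "finite ?F" by (rule rev_finite_subset[OF finite_Pow_iff[THEN iffD2]]) auto
  have ne: "?F \<noteq> {}" using assms(2) by blast
  obtain m where m: "m \<in> ?F" "\<forall>b\<in>?F. b \<le> m \<longrightarrow> m = b"
    using finite_has_minimal[OF fin ne] by blast
  have "\<not> biconnected N (m - {e})" if "e \<in> m" for e
  proof
    assume "biconnected N (m - {e})"
    then have "m - {e} \<in> ?F" using m(1) by auto
    then show False using m(2) that by auto
  qed
  then have "minimally_biconnected N m" using m(1) unfolding minimally_biconnected_def by blast
  moreover have "simple_graph N m" using assms(1) m(1) unfolding simple_graph_def by blast
  ultimately show ?thesis using m(1) by blast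
qed

section \<open>Relabelling\<close>

lemma biconnected_image:
  assumes inj: "inj_on h N" and edges: "\<forall>e\<in>S. e \<subseteq> N" and bic: "biconnected N S"
  shows "biconnected (h ` N) (image h ` S)"
proof -
  have reach_image: "reach (image h ` T) (h p) (h q)" if "reach T p q" for T p q
  proof (rule reach_map[OF that])
    fix a b assume "{a, b} \<in> T"
    then have "{h a, h b} \<in> image h ` T" by (metis image_empty image_eqI image_insert)
    then show "reach (image h ` T) (h a) (h b)" by (rule reach_edge)
  qed
  have "graph_connected (h ` N) (image h ` S)"
    using bic reach_image unfolding biconnected_def graph_connected_def by blast
  moreover have "graph_connected (h ` N - {h v}) {e \<in> image h ` S. h v \<notin> e}" if "v \<in> N" for v
  proof -
    have sub: "image h ` {e \<in> S. v \<notin> e} \<subseteq> {e \<in> image h ` S. h v \<notin> e}"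
      using inj_on_image_mem_iff[OF inj that] edges by auto
    have "h ` N - {h v} = h ` (N - {v})" using inj that by (simp add: inj_on_image_set_diff)
    then show ?thesis
      using bic that reach_image reach_mono[OF _ sub] unfolding biconnected_def graph_connected_def
      by auto
  qed
  ultimately show ?thesis
    using bic card_image[OF inj] unfolding biconnected_def by auto
qed

lemma simple_graph_image:
  assumes "inj_on h N" "simple_graph N S"
  shows "simple_graph (h ` N) (image h ` S)"
  using assms unfolding simple_graph_def by (auto simp: card_image inj_on_subset)

lemma minimally_biconnected_image:
  assumes inj: "inj_on h N" and simple: "simple_graph N S" and mb: "minimally_biconnected N S"
  shows "minimally_biconnected (h ` N) (image h ` S)"
proof -
  have edges: "\<forall>e\<in>S. e \<subseteq> N" using simple unfolding simple_graph_def by blast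
  have inj_edges: "inj_on (image h) S"
  proof (rule inj_onI)
    fix a b assume "a \<in> S" "b \<in> S" "h ` a = h ` b"
    then show "a = b" using inj_on_image_eq_iff[OF inj, of a b] edges by simp
  qed
  have "\<not> biconnected (h ` N) (image h ` S - {h ` e})" if "e \<in> S" for e
  proof
    let ?g = "inv_into N h"
    assume "biconnected (h ` N) (image h ` S - {h ` e})"
    moreover have "image h ` S - {h ` e} = image h ` (S - {e})"
      using inj_edges that by (simp add: inj_on_image_set_diff)
    ultimately have "biconnected (h ` N) (image h ` (S - {e}))" by simp
    moreover have "\<forall>e'\<in>image h ` (S - {e}). e' \<subseteq> h ` N" using edges by blast
    ultimately have "biconnected (?g ` h ` N) (image ?g ` image h ` (S - {e}))"
      by (intro biconnected_image[OF inj_on_inv_into[OF subset_refl]])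
    moreover have "image ?g ` image h ` (S - {e}) = S - {e}"
    proof -
      have "?g ` h ` e' = e'" if "e' \<in> S" for e'
        using inv_into_image_cancel[OF inj] edges that by blast
      then show ?thesis by (simp add: image_image)
    qed
    ultimately have "biconnected N (S - {e})" using inj by simp
    then show False using mb that unfolding minimally_biconnected_def by blast
  qed
  then show ?thesis
    using biconnected_image[OF inj edges] mb unfolding minimally_biconnected_def by blast
qed

lemma has_minor_image:
  assumes minor: "has_minor V E VH EH" and inj: "inj_on h VH" and edges: "\<forall>e\<in>EH. e \<subseteq> VH"
  shows "has_minor V E (h ` VH) (image h ` EH)"
proof -
  obtain X where
    branch: "\<forall>v\<in>VH. X v \<noteq> {} \<and> X v \<subseteq> V \<and> graph_connected (X v) {e \<in> E. e \<subseteq> X v}" and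
    disjoint: "\<forall>u\<in>VH. \<forall>v\<in>VH. u \<noteq> v \<longrightarrow> X u \<inter> X v = {}" and
    realised: "\<forall>u v. {u, v} \<in> EH \<longrightarrow> (\<exists>x\<in>X u. \<exists>y\<in>X v. {x, y} \<in> E)"
    using minor unfolding has_minor_def by blast
  let ?g = "inv_into VH h"
  have g: "?g (h v) = v" if "v \<in> VH" for v using inj that by simp
  show ?thesis
    unfolding has_minor_def
  proof (intro exI[of _ "X \<circ> ?g"] conjI ballI allI impI)
    fix v' assume "v' \<in> h ` VH"
    then show "(X \<circ> ?g) v' \<noteq> {}" "(X \<circ> ?g) v' \<subseteq> V"
      "graph_connected ((X \<circ> ?g) v') {e \<in> E. e \<subseteq> (X \<circ> ?g) v'}"
      using branch g by auto
  next
    fix u' v' assume "u' \<in> h ` VH" "v' \<in> h ` VH" "u' \<noteq> v'"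
    then obtain u v where "u \<in> VH" "v \<in> VH" "u' = h u" "v' = h v" "u \<noteq> v" by blast
    then show "(X \<circ> ?g) u' \<inter> (X \<circ> ?g) v' = {}" using disjoint g by simp
  next
    fix u' v' assume "{u', v'} \<in> image h ` EH"
    then obtain e where e: "e \<in> EH" "{u', v'} = h ` e" by blast
    then obtain u v where uv: "u \<in> e" "v \<in> e" "u' = h u" "v' = h v" by (metis imageE insertI1 insertI2)
    have "e = {u, v}"
    proof
      show "e \<subseteq> {u, v}"
      proof
        fix z assume "z \<in> e"
        then have "h z = h u \<or> h z = h v" using e(2) uv by blast
        then show "z \<in> {u, v}" using inj edges e(1) \<open>z \<in> e\<close> uv(1,2) unfolding inj_on_def by blast
      qed
    qed (use uv in blast)
    then have "\<exists>x\<in>X u. \<exists>y\<in>X v. {x, y} \<in> E" using realised e(1) by blast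
    moreover have "u \<in> VH" "v \<in> VH" using uv(1,2) edges e(1) by auto
    ultimately show "\<exists>x\<in>(X \<circ> ?g) u'. \<exists>y\<in>(X \<circ> ?g) v'. {x, y} \<in> E"
      using g uv(3,4) by simp
  qed
qed

lemma cone_image:
  "cone (h ` N) (image h ` D) (h w) = (h ` fst (cone N D w), image h ` snd (cone N D w))"
proof -
  have "image h ` {{w, v} |v. v \<in> N} = {{h w, v} |v. v \<in> h ` N}"
    by (auto simp: image_iff) (metis image_empty image_insert)
  then show ?thesis unfolding cone_def by (simp add: image_Un)
qed

lemma has_cone_minor_relabel_nat:
  assumes minor: "has_minor V E (fst (cone N D w)) (snd (cone N D w))"
    and simple: "simple_graph N D" and mb: "minimally_biconnected N D" and "w \<notin> N"
  shows "\<exists>(VH :: nat set) EH a. simple_graph VH EH \<and> card VH = card N \<and> a \<notin> VH \<and>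
    minimally_biconnected VH EH \<and> has_minor V E (fst (cone VH EH a)) (snd (cone VH EH a))"
proof -
  let ?k = "card N"
  have "finite N" using simple unfolding simple_graph_def by blast
  then obtain g where g: "bij_betw g N {0..<?k}" using ex_bij_betw_finite_nat by blast
  define h where "h = g(w := ?k)"
  have "h v = g v" if "v \<in> N" for v using that \<open>w \<notin> N\<close> unfolding h_def by auto
  then have inj: "inj_on h N" and image: "h ` N = {0..<?k}"
    using g inj_on_cong[of N h g] image_cong[of N N h g] unfolding bij_betw_def by auto
  have "h w = ?k" unfolding h_def by simp
  then have "h w \<notin> h ` (N - {w})" using image \<open>w \<notin> N\<close> by simp
  then have "inj_on h (fst (cone N D w))" using inj unfolding cone_def by simp
  moreover have "\<forall>e\<in>snd (cone N D w). e \<subseteq> fst (cone N D w)"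
    using simple unfolding simple_graph_def cone_def by auto
  ultimately have "has_minor V E (fst (cone (h ` N) (image h ` D) (h w)))
      (snd (cone (h ` N) (image h ` D) (h w)))"
    unfolding cone_image fst_conv snd_conv by (rule has_minor_image[OF minor])
  then show ?thesis
    using \<open>h w = ?k\<close> simple_graph_image[OF inj simple] minimally_biconnected_image[OF inj simple mb] image
    by (intro exI[of _ "h ` N"] exI[of _ "image h ` D"] exI[of _ ?k]) simp
qed

section \<open>The cone minor\<close>

lemma has_minor_cone_if_rooted_minor:
  assumes minor: "rooted_minor (V - {w}) {e \<in> E. w \<notin> e} N EN"
    and edges: "\<forall>e\<in>EN. e \<subseteq> N" and "w \<in> V" and N: "N \<subseteq> neighbours E w"
  shows "has_minor V E (fst (cone N EN w)) (snd (cone N EN w))"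
proof -
  obtain X where
    branch: "\<forall>v\<in>N. v \<in> X v \<and> X v \<subseteq> V - {w} \<and>
      graph_connected (X v) {e \<in> {e \<in> E. w \<notin> e}. e \<subseteq> X v}" and
    disjoint: "\<forall>u\<in>N. \<forall>v\<in>N. u \<noteq> v \<longrightarrow> X u \<inter> X v = {}" and
    realised: "\<forall>u v. {u, v} \<in> EN \<longrightarrow> (\<exists>a\<in>X u. \<exists>b\<in>X v. {a, b} \<in> {e \<in> E. w \<notin> e})"
    using minor unfolding rooted_minor_def by blast
  have "w \<notin> N" using branch by blast
  let ?Y = "X(w := {w})"
  show ?thesis
    unfolding has_minor_def cone_def fst_conv snd_conv
  proof (intro exI[of _ ?Y] conjI ballI allI impI)
    fix v assume "v \<in> insert w N"
    then show "?Y v \<noteq> {}" "?Y v \<subseteq> V" using branch \<open>w \<in> V\<close> by auto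
    show "graph_connected (?Y v) {e \<in> E. e \<subseteq> ?Y v}"
    proof (cases "v = w")
      case False
      then have "graph_connected (X v) {e \<in> {e \<in> E. w \<notin> e}. e \<subseteq> X v}"
        using branch \<open>v \<in> insert w N\<close> by blast
      then show ?thesis using False by (auto elim: graph_connected_mono)
    qed (simp add: graph_connected_def)
  next
    fix u v assume "u \<in> insert w N" "v \<in> insert w N" "u \<noteq> v"
    then show "?Y u \<inter> ?Y v = {}" using disjoint branch by auto
  next
    fix u v assume "{u, v} \<in> EN \<union> {{w, v} |v. v \<in> N}"
    then consider "{u, v} \<in> EN" | "u = w" "v \<in> N" | "v = w" "u \<in> N"
      by (auto simp: doubleton_eq_iff)
    then show "\<exists>a\<in>?Y u. \<exists>b\<in>?Y v. {a, b} \<in> E"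
    proof cases
      case 1
      then have "u \<noteq> w" "v \<noteq> w" using edges \<open>w \<notin> N\<close> by auto
      moreover obtain a b where "a \<in> X u" "b \<in> X v" "{a, b} \<in> E" using realised 1 by blast
      ultimately show ?thesis by auto
    next
      case 2
      then show ?thesis using branch N \<open>w \<notin> N\<close> unfolding neighbours_def by auto
    next
      case 3
      then show ?thesis using branch N \<open>w \<notin> N\<close> unfolding neighbours_def
        by (auto simp: insert_commute)
    qed
  qed
qed

theorem proposition5p5:
  fixes V :: "'a set" and E :: "'a set set" and w :: 'a and k :: nat
  assumes "simple_graph V E"
    and "biconnected V E"
    and "w \<in> V"
    and "flacet E graphic_indep {e \<in> E. w \<notin> e}"
    and "k_level E graphic_indep {e \<in> E. w \<notin> e} k"
  shows "\<exists>(VH :: nat set) EH (a :: nat).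
           simple_graph VH EH \<and> card VH = k \<and> a \<notin> VH \<and>
           minimally_biconnected VH EH \<and>
           has_minor V E (fst (cone VH EH a)) (snd (cone VH EH a))"
proof -
  let ?F = "{e \<in> E. w \<notin> e}"
  have simple_F: "simple_graph (V - {w}) ?F" using assms(1) unfolding simple_graph_def by auto
  have bic_F: "biconnected (V - {w}) ?F"
    using biconnected_delete_vertex_if_restriction_connected[OF assms(1-3)] assms(4)
    unfolding flacet_def by blast
  then have "3 \<le> card V"
    using assms(1,3) unfolding biconnected_def simple_graph_def by (simp add: card_Diff_singleton) linarith
  then interpret apex_graph V E w using assms(1-3) by unfold_locales
  obtain N where N: "N \<subseteq> neighbours E w" "card N = k"
    using k_level_bounds(2)[OF assms(5)] by (rule obtain_subset_with_card_n)
  then have "N \<subseteq> V - {w}" using neighbours_subset by blast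
  then obtain DN where DN: "simple_graph N DN" "biconnected N DN" "rooted_minor (V - {w}) ?F N DN"
    using ex_biconnected_rooted_minor[OF simple_F bic_F] k_level_bounds(1)[OF assms(5)] N(2) by auto
  obtain D0 where D0: "D0 \<subseteq> DN" "minimally_biconnected N D0" "simple_graph N D0"
    using ex_minimally_biconnected_subgraph[OF DN(1,2)] by blast
  have "rooted_minor (V - {w}) ?F N D0" using DN(3) D0(1) by (rule rooted_minor_subgraph)
  moreover have "\<forall>e\<in>D0. e \<subseteq> N" using D0(3) unfolding simple_graph_def by blast
  ultimately have "has_minor V E (fst (cone N D0 w)) (snd (cone N D0 w))"
    using assms(3) N(1) by (rule has_minor_cone_if_rooted_minor)
  moreover have "w \<notin> N" using \<open>N \<subseteq> V - {w}\<close> by blast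
  ultimately show ?thesis using has_cone_minor_relabel_nat D0(2,3) N(2) by metis
qed

end
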